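(* (1) There exists a minimal monad on $\mathbb{P}^3$ of the form $$\mathcal{O}(-5)\oplus\mathcal{O}(-3)\xrightarrow{\alpha}\mathcal{O}(3)\oplus\mathcal{O}(1)^{\oplus2}\oplus\mathcal{O}(-2)^{\oplus2}\oplus\mathcal{O}(-4)\xrightarrow{\beta}\mathcal{O}(4)\oplus\mathcal{O}(2)$$ (i.e. $\boldsymbol{a}=(4,2)$, $\boldsymbol{b}=(3,1,1)$). (2) There exists a minimal monad on $\mathbb{P}^3$ of the form $$\mathcal{O}(-4)^{\oplus2}\xrightarrow{\alpha}\mathcal{O}(2)^{\oplus2}\oplus\mathcal{O}(1)\oplus\mathcal{O}(-2)\oplus\mathcal{O}(-3)^{\oplus2}\xrightarrow{\beta}\mathcal{O}(3)^{\oplus2}$$ (i.e. $\boldsymbol{a}=(3,3)$, $\boldsymbol{b}=(2,2,1)$).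
   Context: Work on $\mathbb{P}^3$ over an algebraically closed field; $\mathcal{O}=\mathcal{O}_{\mathbb{P}^3}$. A monad is a complex $\mathcal{C}\xrightarrow{\alpha}\mathcal{B}\xrightarrow{\beta}\mathcal{A}$ of vector bundles (so $\beta\circ\alpha=0$) with $\alpha$ injective and $\beta$ surjective; it is minimal if no entry of the matrices of $\alpha$ and $\beta$, as homogeneous forms, is a nonzero constant. *)

theory Defs
  imports "HOL-Library.Poly_Mapping" "HOL-Computational_Algebra.Polynomial"
begin

text \<open>Polynomials in the variables x_0,...,x_3 (homogeneous coordinates of P^3) over a field 'k:
  a polynomial is a finitely supported map from monomials (exponent vectors, finitely supported
  maps nat to nat) to coefficients.\<close>

type_synonym 'k mpoly = "(nat \<Rightarrow>\<^sub>0 nat) \<Rightarrow>\<^sub>0 'k"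

text \<open>A polynomial in x_0..x_3 that is a homogeneous form of degree d (0 is a form of every degree).\<close>
definition homog_form :: "nat \<Rightarrow> 'k::zero mpoly \<Rightarrow> bool" where
  "homog_form d p \<longleftrightarrow>
     (\<forall>m \<in> Poly_Mapping.keys p. (\<forall>i. Poly_Mapping.lookup m i \<noteq> 0 \<longrightarrow> i < 4) \<and> (\<Sum>i<4. Poly_Mapping.lookup m i) = d)"

text \<open>Entry of a map O(c) to O(b): a form of degree b - c (necessarily 0 if b < c).\<close>
definition form_of_deg :: "int \<Rightarrow> 'k::zero mpoly \<Rightarrow> bool" where
  "form_of_deg e p \<longleftrightarrow> (if e < 0 then p = 0 else homog_form (nat e) p)"

definition peval :: "'k::comm_semiring_1 mpoly \<Rightarrow> (nat \<Rightarrow> 'k) \<Rightarrow> 'k" where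
  "peval p x = (\<Sum>m\<in>Poly_Mapping.keys p. Poly_Mapping.lookup p m * (\<Prod>i<4. x i ^ Poly_Mapping.lookup m i))"

definition nonzero_const :: "'k::zero mpoly \<Rightarrow> bool" where
  "nonzero_const p \<longleftrightarrow> p \<noteq> 0 \<and> Poly_Mapping.keys p \<subseteq> {0}"

text \<open>Points of P^3: nonzero vectors of k^4 (coordinates 0..3).\<close>
definition nonzero_pt :: "(nat \<Rightarrow> 'k::zero) \<Rightarrow> bool" where
  "nonzero_pt x \<longleftrightarrow> (\<exists>i<4. x i \<noteq> 0)"

text \<open>Minimal monad  C = \<Oplus>_k O(cs!k)  --alpha-->  B = \<Oplus>_j O(bs!j)  --beta-->  A = \<Oplus>_i O(as!i).
  alpha is given by the matrix (alpha j k), beta by (beta i j).\<close>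
definition minimal_monad ::
  "int list \<Rightarrow> int list \<Rightarrow> int list \<Rightarrow> (nat \<Rightarrow> nat \<Rightarrow> 'k::field mpoly) \<Rightarrow> (nat \<Rightarrow> nat \<Rightarrow> 'k mpoly) \<Rightarrow> bool"
where
  "minimal_monad cs bs as alpha beta \<longleftrightarrow>
     (\<forall>j<length bs. \<forall>k<length cs. form_of_deg (bs!j - cs!k) (alpha j k)) \<and>
     (\<forall>i<length as. \<forall>j<length bs. form_of_deg (as!i - bs!j) (beta i j)) \<and>
     (\<forall>i<length as. \<forall>k<length cs. (\<Sum>j<length bs. beta i j * alpha j k) = 0) \<and>
     (\<forall>x. nonzero_pt x \<longrightarrow> (\<forall>v::nat \<Rightarrow> 'k.
         (\<forall>j<length bs. (\<Sum>k<length cs. peval (alpha j k) x * v k) = 0) \<longrightarrow> (\<forall>k<length cs. v k = 0))) \<and>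
     (\<forall>x. nonzero_pt x \<longrightarrow> (\<forall>w::nat \<Rightarrow> 'k. \<exists>v::nat \<Rightarrow> 'k.
         \<forall>i<length as. (\<Sum>j<length bs. peval (beta i j) x * v j) = w i)) \<and>
     (\<forall>j<length bs. \<forall>k<length cs. \<not> nonzero_const (alpha j k)) \<and>
     (\<forall>i<length as. \<forall>j<length bs. \<not> nonzero_const (beta i j))"

end

theory Submission
  imports Defs
begin

(* Both monads are self-dual.  With J the standard symplectic form on the middle term, pairing
   the j-th summand with the (5-j)-th, take alpha = J beta^T; the degrees fit because the twists
   of paired summands of the middle term add up to -1, as do those of the k-th summands of the
   two outer terms.  Then beta alpha = 0 says that the rows of beta are J-isotropic, a polynomial
   identity, and alpha is injective on every fibre because up to the invertible J it is the
   transpose of beta, which is surjective on every fibre: on each chart x_i nonzero some 2x2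
   minor of beta is, up to sign, a power of x_i. *)

definition var_power :: "nat \<Rightarrow> nat \<Rightarrow> 'k::zero_neq_one mpoly" where
  "var_power i d = Poly_Mapping.single (Poly_Mapping.single i d) 1"

lemma keys_var_power:
  "Poly_Mapping.keys (var_power i d :: 'k::zero_neq_one mpoly) = {Poly_Mapping.single i d}"
  by (simp add: var_power_def)

lemma keys_uminus_mpoly: "Poly_Mapping.keys (- p :: 'k::ab_group_add mpoly) = Poly_Mapping.keys p"
  by (auto simp: in_keys_iff)

lemma homog_form_var_power [simp]:
  "i < 4 \<Longrightarrow> homog_form d (var_power i d :: 'k::zero_neq_one mpoly)"
  by (auto simp: homog_form_def keys_var_power lookup_single when_def eval_nat_numeral)

lemma homog_form_zero [simp]: "homog_form d 0"
  by (simp add: homog_form_def)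

lemma form_of_deg_uminus [simp]:
  "form_of_deg e (- p :: 'k::ab_group_add mpoly) \<longleftrightarrow> form_of_deg e p"
  by (simp add: form_of_deg_def homog_form_def keys_uminus_mpoly)

lemma peval_var_power [simp]:
  "i < 4 \<Longrightarrow> peval (var_power i d :: 'k::comm_semiring_1 mpoly) x = x i ^ d"
  by (auto simp: peval_def keys_var_power var_power_def lookup_single when_def eval_nat_numeral
      less_Suc_eq)

lemma peval_uminus [simp]: "peval (- p :: 'k::comm_ring_1 mpoly) x = - peval p x"
  by (simp add: peval_def keys_uminus_mpoly sum_negf)

lemma peval_zero [simp]: "peval 0 x = 0"
  by (simp add: peval_def)

lemma not_nonzero_const_var_power [simp]:
  "0 < d \<Longrightarrow> \<not> nonzero_const (var_power i d :: 'k::zero_neq_one mpoly)"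
  by (auto simp: nonzero_const_def keys_var_power poly_mapping_eq_iff fun_eq_iff lookup_single
      when_def)

lemma not_nonzero_const_zero [simp]: "\<not> nonzero_const 0"
  by (simp add: nonzero_const_def)

lemma nonzero_const_uminus [simp]:
  "nonzero_const (- p :: 'k::ab_group_add mpoly) \<longleftrightarrow> nonzero_const p"
  by (simp add: nonzero_const_def keys_uminus_mpoly)

lemma nonzero_pt_cases:
  assumes "nonzero_pt x"
  obtains "x 0 \<noteq> 0" | "x 1 \<noteq> 0" | "x 2 \<noteq> 0" | "x 3 \<noteq> 0"
  using assms by (auto simp: nonzero_pt_def less_Suc_eq eval_nat_numeral)

lemma transpose_injective_if_surjective:
  fixes M :: "nat \<Rightarrow> nat \<Rightarrow> 'a::comm_ring_1"
  assumes surj: "\<forall>w. \<exists>u. \<forall>i<m. (\<Sum>j<n. M i j * u j) = w i"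
    and kernel: "\<forall>j<n. (\<Sum>i<m. M i j * v i) = 0"
    and "i0 < m"
  shows "v i0 = 0"
proof -
  obtain u where u: "\<forall>i<m. (\<Sum>j<n. M i j * u j) = (if i = i0 then 1 else 0)"
    using spec[OF surj, of "\<lambda>i. if i = i0 then 1 else 0"] by blast
  have "v i0 = (\<Sum>i<m. v i * (if i = i0 then 1 else 0))"
    using \<open>i0 < m\<close> by (simp add: if_distrib[of "times (v _)"] cong: if_cong)
  also have "\<dots> = (\<Sum>i<m. v i * (\<Sum>j<n. M i j * u j))"
    using u by simp
  also have "\<dots> = (\<Sum>j<n. u j * (\<Sum>i<m. M i j * v i))"
    by (simp add: sum_distrib_left sum.swap[of _ "{..<n}"] ac_simps)
  also have "\<dots> = 0"
    using kernel by simp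
  finally show ?thesis .
qed

lemma surjective_if_minor_nonzero:
  fixes M :: "nat \<Rightarrow> nat \<Rightarrow> 'k::field"
  assumes "p < n" "q < n" and minor: "M 0 p * M 1 q - M 0 q * M 1 p \<noteq> 0"
  shows "\<exists>u. \<forall>i<2. (\<Sum>j<n. M i j * u j) = w i"
proof -
  define d where "d = M 0 p * M 1 q - M 0 q * M 1 p"
  define a where "a = (w 0 * M 1 q - w 1 * M 0 q) / d"
  define b where "b = (M 0 p * w 1 - M 1 p * w 0) / d"
  define u where "u j = (if j = p then a else 0) + (if j = q then b else 0)" for j
  have "d \<noteq> 0" "p \<noteq> q"
    using minor by (auto simp: d_def)
  have "(\<Sum>j<n. M i j * u j) = M i p * a + M i q * b" for i
    using assms(1,2) \<open>p \<noteq> q\<close>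
    by (simp add: u_def distrib_left sum.distrib if_distrib[of "times (M i _)"] cong: if_cong)
  moreover have "M 0 p * a + M 0 q * b = w 0 * d / d" "M 1 p * a + M 1 q * b = w 1 * d / d"
    unfolding a_def b_def d_def by (simp_all add: add_divide_distrib[symmetric] algebra_simps)
  ultimately have "\<forall>i<2. (\<Sum>j<n. M i j * u j) = w i"
    using \<open>d \<noteq> 0\<close> by (simp add: less_2_cases_iff)
  then show ?thesis
    by (rule exI[of _ u])
qed

definition fibre_surjective ::
    "(nat \<Rightarrow> nat \<Rightarrow> 'k::comm_semiring_1 mpoly) \<Rightarrow> nat \<Rightarrow> nat \<Rightarrow> bool" where
  "fibre_surjective beta r m \<longleftrightarrow>
     (\<forall>x. nonzero_pt x \<longrightarrow> (\<forall>w. \<exists>v. \<forall>i<r. (\<Sum>j<m. peval (beta i j) x * v j) = w i))"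

lemma fibre_surjective_if_minor_nonzero:
  fixes beta :: "nat \<Rightarrow> nat \<Rightarrow> 'k::field mpoly"
  assumes "r = 2" and "columns \<subseteq> {..<m} \<times> {..<m}"
    and minor: "\<And>x. nonzero_pt x \<Longrightarrow> \<exists>(p, q) \<in> columns.
      peval (beta 0 p) x * peval (beta 1 q) x - peval (beta 0 q) x * peval (beta 1 p) x \<noteq> 0"
  shows "fibre_surjective beta r m"
  unfolding fibre_surjective_def
proof (intro allI impI)
  fix x :: "nat \<Rightarrow> 'k" and w
  assume "nonzero_pt x"
  then obtain p q where "p < m" "q < m"
    "peval (beta 0 p) x * peval (beta 1 q) x - peval (beta 0 q) x * peval (beta 1 p) x \<noteq> 0"
    using minor \<open>columns \<subseteq> {..<m} \<times> {..<m}\<close> by blast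
  then show "\<exists>v. \<forall>i<r. (\<Sum>j<m. peval (beta i j) x * v j) = w i"
    unfolding \<open>r = 2\<close> by (rule surjective_if_minor_nonzero)
qed

definition symplectic_adjoint ::
    "nat \<Rightarrow> (nat \<Rightarrow> nat \<Rightarrow> 'a::uminus) \<Rightarrow> nat \<Rightarrow> nat \<Rightarrow> 'a" where
  "symplectic_adjoint n beta j k =
     (if j < n then beta k (2 * n - 1 - j) else - beta k (2 * n - 1 - j))"

lemma minimal_monad_symplectic_adjoint:
  fixes beta :: "nat \<Rightarrow> nat \<Rightarrow> 'k::field mpoly"
  assumes len: "length bs = 2 * n" "length cs = length as"
    and bs_dual: "\<forall>j<2 * n. bs ! j + bs ! (2 * n - 1 - j) = t"
    and cs_dual: "\<forall>k<length as. as ! k + cs ! k = t"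
    and beta_deg: "\<forall>i<length as. \<forall>j<2 * n. form_of_deg (as ! i - bs ! j) (beta i j)"
    and beta_nonconst: "\<forall>i<length as. \<forall>j<2 * n. \<not> nonzero_const (beta i j)"
    and isotropic: "\<forall>i<length as. \<forall>k<length as.
      (\<Sum>j<2 * n. beta i j * symplectic_adjoint n beta j k) = 0"
    and surj: "fibre_surjective beta (length as) (2 * n)"
  shows "minimal_monad cs bs as (symplectic_adjoint n beta) beta"
proof -
  have reflect: "2 * n - 1 - j < 2 * n" "2 * n - 1 - (2 * n - 1 - j) = j" if "j < 2 * n" for j
    using that by arith+
  have alpha_deg: "form_of_deg (bs ! j - cs ! k) (symplectic_adjoint n beta j k)"
    if "j < 2 * n" "k < length as" for j k
  proof -
    have "bs ! j - cs ! k = as ! k - bs ! (2 * n - 1 - j)"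
      using bs_dual cs_dual that by force
    then show ?thesis
      using beta_deg reflect(1) that by (simp add: symplectic_adjoint_def)
  qed
  have alpha_injective: "\<forall>k<length as. v k = 0"
    if "nonzero_pt x"
      and kernel: "\<forall>j<2 * n. (\<Sum>k<length as. peval (symplectic_adjoint n beta j k) x * v k) = 0"
    for x v
  proof -
    have beta_kernel: "\<forall>j<2 * n. (\<Sum>k<length as. peval (beta k j) x * v k) = 0"
    proof (intro allI impI)
      fix j
      assume "j < 2 * n"
      then obtain j' where j': "j' < 2 * n" "2 * n - 1 - j' = j"
        using reflect by blast
      then have "(\<Sum>k<length as. peval (symplectic_adjoint n beta j' k) x * v k) = 0"
        using kernel by blast
      then show "(\<Sum>k<length as. peval (beta k j) x * v k) = 0"
        unfolding symplectic_adjoint_def j'(2)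
        by (cases "j' < n") (simp_all add: sum_negf)
    qed
    have beta_surj: "\<forall>w. \<exists>u. \<forall>i<length as. (\<Sum>j<2 * n. peval (beta i j) x * u j) = w i"
      using surj \<open>nonzero_pt x\<close> unfolding fibre_surjective_def by blast
    show ?thesis
      using transpose_injective_if_surjective[OF beta_surj beta_kernel] by blast
  qed
  show ?thesis
    unfolding minimal_monad_def len
    using alpha_deg beta_deg isotropic alpha_injective surj[unfolded fibre_surjective_def]
      beta_nonconst reflect(1)
    by (auto simp: symplectic_adjoint_def)
qed

definition beta_a42 :: "nat \<Rightarrow> nat \<Rightarrow> 'k::zero_neq_one mpoly" where
  "beta_a42 i j =
    [[var_power 0 1, var_power 1 3, 0, 0, var_power 2 6, var_power 3 8],
     [0, var_power 0 1, var_power 1 1, var_power 3 4, 0, var_power 2 6]] ! i ! j"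

lemma minimal_monad_a42:
  "minimal_monad [-5, -3] [3, 1, 1, -2, -2, -4] [4, 2]
     (symplectic_adjoint 3 beta_a42) (beta_a42 :: _ \<Rightarrow> _ \<Rightarrow> 'k::field mpoly)"
proof (rule minimal_monad_symplectic_adjoint[where t = "-1"])
  show "fibre_surjective (beta_a42 :: _ \<Rightarrow> _ \<Rightarrow> 'k mpoly) (length [4, 2::int]) (2 * 3)"
    by (rule fibre_surjective_if_minor_nonzero
        [where columns = "{(0, 1), (1, 2), (4, 5), (5, 3)}"])
      (auto elim: nonzero_pt_cases simp: beta_a42_def)
qed (simp_all add: beta_a42_def symplectic_adjoint_def form_of_deg_def All_less_Suc
      eval_nat_numeral algebra_simps)

definition beta_a33 :: "nat \<Rightarrow> nat \<Rightarrow> 'k::zero_neq_one mpoly" where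
  "beta_a33 i j =
    [[0, var_power 0 1, var_power 1 2, var_power 2 5, 0, var_power 3 6],
     [var_power 0 1, var_power 1 1, 0, 0, var_power 3 6, var_power 2 6]] ! i ! j"

lemma minimal_monad_a33:
  "minimal_monad [-4, -4] [2, 2, 1, -2, -3, -3] [3, 3]
     (symplectic_adjoint 3 beta_a33) (beta_a33 :: _ \<Rightarrow> _ \<Rightarrow> 'k::field mpoly)"
proof (rule minimal_monad_symplectic_adjoint[where t = "-1"])
  show "fibre_surjective (beta_a33 :: _ \<Rightarrow> _ \<Rightarrow> 'k mpoly) (length [3, 3::int]) (2 * 3)"
    by (rule fibre_surjective_if_minor_nonzero
        [where columns = "{(0, 1), (1, 2), (3, 5), (5, 4)}"])
      (auto elim: nonzero_pt_cases simp: beta_a33_def)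
qed (simp_all add: beta_a33_def symplectic_adjoint_def form_of_deg_def All_less_Suc
      eval_nat_numeral algebra_simps)

theorem proposition13:
  shows "(\<exists>(alpha :: nat \<Rightarrow> nat \<Rightarrow> 'k::alg_closed_field mpoly) beta.
            minimal_monad [-5, -3] [3, 1, 1, -2, -2, -4] [4, 2] alpha beta) \<and>
         (\<exists>(alpha :: nat \<Rightarrow> nat \<Rightarrow> 'k mpoly) beta.
            minimal_monad [-4, -4] [2, 2, 1, -2, -3, -3] [3, 3] alpha beta)"
  using minimal_monad_a42 minimal_monad_a33 by blast

end
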